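(* Let $d\ge1$, let $\Omega\subset\mathbb{R}^d$ be a bounded open set with $\partial\Omega\in C^{1,1}$, let $s\in(0,1)$, and let $\delta$ satisfy assumption $(\mathrm{A}_\delta^\sigma)$ with $\sigma=1$. Let $\mathcal T_h$ be an over-triangulation of $\Omega$ and $V_h$ the associated weighted finite element space. Then $V_h\subset V$.
   Context: $H^s(\mathbb{R}^d)=\{w\in L^2(\mathbb{R}^d): [w]_{H^s(\mathbb{R}^d)}<\infty\}$ where $[w]_{H^s(\mathbb{R}^d)}^2=\frac{C_{d,s}}{2}\iint\frac{|w(x)-w(y)|^2}{|x-y|^{d+2s}}dx\,dy$ (with $C_{d,s}=\frac{4^s\Gamma(d/2+s)}{\pi^{d/2}|\Gamma(-s)|}$), and $V=\{w\in H^s(\mathbb{R}^d): w=0\text{ in }\mathbb{R}^d\setminus\Omega\}$. $W^{\alpha,\infty}(\Omega):=C^{\lceil\alpha\rceil-1,\alpha-\lceil\alpha\rceil+1}(\overline\Omega)$ (so $W^{1,\infty}(\Omega)$ = Lipschitz functions on $\overline\Omega$). $d_\Omega(x)=\mathrm{dist}(x,\mathbb{R}^d\setminus\Omega)$. Assumption $(\mathrm{A}_\delta^\sigma)$: $\delta:\mathbb{R}^d\to[0,\infty)$, $\delta\in C^\infty(\Omega)\cap W^{\sigma,\infty}(\Omega)$, $\frac1c d_\Omega\le\delta\le c\,d_\Omega$ in $\mathbb{R}^d$, and $|D^j\delta|\le c_j\delta^{\sigma-|j|}$ in $\Omega$ for all multi-indices $|j|>\sigma$. Over-triangulation $\mathcal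 T_h$: finite set of simplices with $\overline\Omega\subset\bigcup_K\overline K$, each $\overline K$ meeting $\overline\Omega$, shape regular, uniform ($c_1h\le\mathrm{diam}K\le c_2h$), conforming. $\Omega_h=\mathrm{interior}(\bigcup_K\overline K)$, $PL(\mathcal T_h)=\{w\in C(\overline{\Omega_h}): w|_K\text{ linear for all }K\}$, $V_h=\{v:\mathbb{R}^d\to\mathbb{R}: v|_\Omega=\delta^s\varphi\text{ for some }\varphi\in PL(\mathcal T_h),\ v=0\text{ in }\mathbb{R}^d\setminus\Omega\}$. *)

theory Defs
  imports "HOL-Analysis.Analysis"
begin

definition C11_fun :: "('a::euclidean_space \<Rightarrow> real) \<Rightarrow> bool" where
  "C11_fun g \<longleftrightarrow> (\<exists>G L. (\<forall>x. (g has_derivative (\<lambda>h. G x \<bullet> h)) (at x)) \<and>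
                          (\<forall>x y. norm (G x - G y) \<le> L * norm (x - y)))"

text \<open>Omega has a C^{1,1} boundary: near each boundary point, after choosing a unit
direction e (i.e. a rotation of coordinates), Omega is the subgraph of a C^{1,1} function
of the coordinates orthogonal to e.\<close>
definition C11_boundary :: "'a::euclidean_space set \<Rightarrow> bool" where
  "C11_boundary \<Omega> \<longleftrightarrow>
     (\<forall>x0\<in>frontier \<Omega>. \<exists>r e \<gamma>. r > 0 \<and> norm e = 1 \<and> C11_fun \<gamma> \<and>
        \<Omega> \<inter> ball x0 r = {x \<in> ball x0 r. x \<bullet> e < \<gamma> (x - (x \<bullet> e) *\<^sub>R e)})"

definition C_ds :: "nat \<Rightarrow> real \<Rightarrow> real" where
  "C_ds d s = 4 powr s * Gamma (real d / 2 + s) / (pi powr (real d / 2) * \<bar>Gamma (- s)\<bar>)"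

definition Hs_seminorm_sq :: "real \<Rightarrow> ('a::euclidean_space \<Rightarrow> real) \<Rightarrow> ennreal" where
  "Hs_seminorm_sq s w =
     ennreal (C_ds DIM('a) s / 2) *
     (\<integral>\<^sup>+ z. ennreal ((w (fst z) - w (snd z))\<^sup>2 /
                     norm (fst z - snd z) powr (real DIM('a) + 2 * s))
        \<partial>(lebesgue \<Otimes>\<^sub>M lebesgue))"

definition Hs :: "real \<Rightarrow> ('a::euclidean_space \<Rightarrow> real) set" where
  "Hs s = {w. w \<in> borel_measurable lebesgue \<and>
              (\<integral>\<^sup>+ x. ennreal ((w x)\<^sup>2) \<partial>lebesgue) < \<infinity> \<and>
              Hs_seminorm_sq s w < \<infinity>}"

definition Vspace :: "real \<Rightarrow> 'a::euclidean_space set \<Rightarrow> ('a \<Rightarrow> real) set" where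
  "Vspace s \<Omega> = {w \<in> Hs s. \<forall>x. x \<notin> \<Omega> \<longrightarrow> w x = 0}"

definition d_Omega :: "'a::euclidean_space set \<Rightarrow> 'a \<Rightarrow> real" where
  "d_Omega \<Omega> x = infdist x (- \<Omega>)"

text \<open>Partial derivative along basis vector i, and iterated partial derivatives
(a list of basis vectors encodes a multi-index; its length is the order).\<close>
definition pderiv_dir :: "'a::euclidean_space \<Rightarrow> ('a \<Rightarrow> real) \<Rightarrow> ('a \<Rightarrow> real)" where
  "pderiv_dir i f = (\<lambda>x. frechet_derivative f (at x) i)"

fun iter_pderiv :: "'a::euclidean_space list \<Rightarrow> ('a \<Rightarrow> real) \<Rightarrow> ('a \<Rightarrow> real)" where
  "iter_pderiv [] f = f"
| "iter_pderiv (i # is) f = pderiv_dir i (iter_pderiv is f)"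

definition smooth_on_set :: "'a::euclidean_space set \<Rightarrow> ('a \<Rightarrow> real) \<Rightarrow> bool" where
  "smooth_on_set U f \<longleftrightarrow>
     (\<forall>is \<in> lists Basis. \<forall>x\<in>U. iter_pderiv is f differentiable (at x))"

text \<open>Assumption (A_delta^sigma) with sigma = 1; W^{1,infty}(Omega) = Lipschitz functions
on the closure of Omega.\<close>
definition assumption_A_delta_1 :: "'a::euclidean_space set \<Rightarrow> ('a \<Rightarrow> real) \<Rightarrow> bool" where
  "assumption_A_delta_1 \<Omega> \<delta> \<longleftrightarrow>
     (\<forall>x. \<delta> x \<ge> 0) \<and>
     smooth_on_set \<Omega> \<delta> \<and>
     (\<exists>L. L-lipschitz_on (closure \<Omega>) \<delta>) \<and>
     (\<exists>c>0. \<forall>x. d_Omega \<Omega> x / c \<le> \<delta> x \<and> \<delta> x \<le> c * d_Omega \<Omega> x) \<and>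
     (\<forall>is \<in> lists Basis. length is > 1 \<longrightarrow>
        (\<exists>cj. \<forall>x\<in>\<Omega>. \<bar>iter_pderiv is \<delta> x\<bar> \<le> cj * \<delta> x powr (1 - real (length is))))"

text \<open>A simplex is given by its vertex set: DIM+1 affinely independent points;
the (closed) simplex is its convex hull.\<close>
definition is_simplex_vertices :: "'a::euclidean_space set \<Rightarrow> bool" where
  "is_simplex_vertices S \<longleftrightarrow> finite S \<and> card S = DIM('a) + 1 \<and> \<not> affine_dependent S"

definition simplices_of :: "'a::euclidean_space set set \<Rightarrow> 'a set set" where
  "simplices_of T = (\<lambda>S. convex hull S) ` T"

definition over_triangulation :: "'a::euclidean_space set \<Rightarrow> real \<Rightarrow> 'a set set \<Rightarrow> bool" where
  "over_triangulation \<Omega> h T \<longleftrightarrow>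
     finite T \<and> (\<forall>S\<in>T. is_simplex_vertices S) \<and>
     closure \<Omega> \<subseteq> \<Union> (simplices_of T) \<and>
     (\<forall>S\<in>T. convex hull S \<inter> closure \<Omega> \<noteq> {}) \<and>
     \<comment> \<open>shape regularity: each simplex contains a ball of radius diam K / c\<close>
     (\<exists>c>0. \<forall>S\<in>T. \<exists>z. ball z (diameter (convex hull S) / c) \<subseteq> convex hull S) \<and>
     \<comment> \<open>uniformity\<close>
     (\<exists>c1 c2. c1 > 0 \<and> c2 > 0 \<and>
        (\<forall>S\<in>T. c1 * h \<le> diameter (convex hull S) \<and> diameter (convex hull S) \<le> c2 * h)) \<and>
     \<comment> \<open>conformity: two simplices meet in the common face spanned by shared vertices\<close>
     (\<forall>S\<in>T. \<forall>S'\<in>T. convex hull S \<inter> convex hull S' = convex hull (S \<inter> S'))"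

definition Omega_h :: "'a::euclidean_space set set \<Rightarrow> 'a set" where
  "Omega_h T = interior (\<Union> (simplices_of T))"

definition PL :: "'a::euclidean_space set set \<Rightarrow> ('a \<Rightarrow> real) set" where
  "PL T = {w. continuous_on (closure (Omega_h T)) w \<and>
              (\<forall>K\<in>simplices_of T. \<exists>a b. \<forall>x\<in>K. w x = a \<bullet> x + b)}"

definition Vh :: "real \<Rightarrow> 'a::euclidean_space set \<Rightarrow> ('a \<Rightarrow> real) \<Rightarrow> 'a set set \<Rightarrow> ('a \<Rightarrow> real) set" where
  "Vh s \<Omega> \<delta> T = {v. (\<exists>\<phi>\<in>PL T. \<forall>x\<in>\<Omega>. v x = \<delta> x powr s * \<phi> x) \<and>
                     (\<forall>x. x \<notin> \<Omega> \<longrightarrow> v x = 0)}"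

end

theory Submission
  imports Defs
begin

text \<open>
  Write v = \<delta>^s \<phi> on \<Omega> and d = d_Omega \<Omega>. Since \<delta> is comparable to d and \<phi> is bounded,
  |v| \<le> A d^s; since moreover \<delta> is Lipschitz and \<phi> is Lipschitz along segments,
  |v x - v y| \<le> K |x - y| d(x)^(s-1) whenever |x - y| < d(x)/2. By symmetry of the kernel,
  the Gagliardo double integral is at most twice its part over d(y) \<le> d(x). For fixed x with
  r = d(x), the near part (|x - y| < r/2) is bounded by K^2 r^(2s-2) times the integral of
  |x - y|^(2-n-2s) over the ball of radius r/2, and the far part by 4 A^2 r^(2s) times the
  integral of |x - y|^(-n-2s) outside it. Summing over dyadic shells, both are bounded
  independently of x, so the double integral is at most a constant times |\<Omega>|.
\<close>

section \<open>Dyadic estimates for radial integrals\<close>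

lemma ex_dyadic_bracket:
  fixes q :: real
  assumes "1 \<le> q"
  shows "\<exists>k::nat. 2 ^ k \<le> q \<and> q < 2 ^ Suc k"
proof -
  have "1 \<le> nat \<lfloor>q\<rfloor>" using assms by linarith
  then obtain k where k: "2 ^ k \<le> nat \<lfloor>q\<rfloor>" "nat \<lfloor>q\<rfloor> < 2 ^ (k + 1)"
    using ex_power_ivl1[of 2 "nat \<lfloor>q\<rfloor>"] by auto
  have "(2::int) ^ k \<le> \<lfloor>q\<rfloor>" "\<lfloor>q\<rfloor> < (2::int) ^ Suc k"
    using k assms by (auto simp: le_nat_iff nat_less_iff)
  then have "2 ^ k \<le> q" "q < 2 ^ Suc k"
    by (simp_all add: le_floor_iff floor_less_iff)
  then show ?thesis by blast
qed

lemma powr_mult_power: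
  fixes b c a :: real
  assumes "0 < b"
  shows "(c * b ^ k) powr a = c powr a * (b powr a) ^ k"
proof -
  have "(b ^ k) powr a = (b powr a) ^ k"
    using assms by (simp add: powr_power powr_powr mult.commute flip: powr_realpow)
  then show ?thesis by (simp add: powr_mult)
qed

lemma powr_le_on_dyadic_shell:
  fixes r R e :: real
  assumes "0 < R" "R / 2 \<le> r" "r \<le> R"
  shows "r powr e \<le> 2 powr \<bar>e\<bar> * R powr e"
proof (cases "0 \<le> e")
  case True
  have "r powr e \<le> R powr e" using assms True by (intro powr_mono2) auto
  also have "\<dots> \<le> 2 powr \<bar>e\<bar> * R powr e"
    using ge_one_powr_ge_zero[of 2 "\<bar>e\<bar>"] by (simp add: mult_le_cancel_right1)
  finally show ?thesis .
next
  case False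
  have "r powr e \<le> (R / 2) powr e" using assms False by (intro powr_mono2') auto
  also have "\<dots> = 2 powr \<bar>e\<bar> * R powr e"
    using False by (simp add: powr_divide powr_minus_divide divide_simps)
  finally show ?thesis .
qed

lemma suminf_ennreal_geometric:
  fixes C q :: real
  assumes "0 \<le> C" "0 \<le> q" "q < 1"
  shows "(\<Sum>k. ennreal (C * q ^ k)) = ennreal (C / (1 - q))"
proof -
  have "(\<lambda>k. C * q ^ k) sums (C * (1 / (1 - q)))"
    using assms by (intro sums_mult geometric_sums) simp
  then show ?thesis
    using assms by (subst suminf_ennreal2) (auto simp: sums_iff)
qed

lemma nn_integral_le_sum_cball_volumes:
  fixes x :: "'a::euclidean_space" and f :: "'a \<Rightarrow> ennreal"
  assumes cover: "\<And>y. f y \<noteq> 0 \<Longrightarrow> \<exists>k. dist x y \<le> R k \<and> f y \<le> ennreal (c k)"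
    and "\<And>k. 0 \<le> R k" and "\<And>k. 0 \<le> c k"
  shows "(\<integral>\<^sup>+y. f y \<partial>lebesgue) \<le> (\<Sum>k. ennreal (c k * unit_ball_vol DIM('a) * R k ^ DIM('a)))"
proof -
  have "f y \<le> (\<Sum>k. ennreal (c k) * indicator (cball x (R k)) y)" for y
  proof (cases "f y = 0")
    case False
    then obtain k where "dist x y \<le> R k" "f y \<le> ennreal (c k)" using cover by blast
    then have "f y \<le> ennreal (c k) * indicator (cball x (R k)) y" by simp
    also have "\<dots> \<le> (\<Sum>k. ennreal (c k) * indicator (cball x (R k)) y)"
      by (metis ennreal_suminf_lessD not_le order_refl)
    finally show ?thesis .
  qed simp
  then have "(\<integral>\<^sup>+y. f y \<partial>lebesgue) \<le> (\<integral>\<^sup>+y. (\<Sum>k. ennreal (c k) * indicator (cball x (R k)) y) \<partial>lebesgue)"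
    by (rule nn_integral_mono)
  also have "\<dots> = (\<Sum>k. \<integral>\<^sup>+y. ennreal (c k) * indicator (cball x (R k)) y \<partial>lebesgue)"
    by (intro nn_integral_suminf borel_measurable_times_ennreal borel_measurable_const
        borel_measurable_indicator) simp
  also have "\<dots> = (\<Sum>k. ennreal (c k) * emeasure lebesgue (cball x (R k)))"
    by (intro suminf_cong nn_integral_cmult_indicator) simp
  also have "\<dots> = (\<Sum>k. ennreal (c k * unit_ball_vol DIM('a) * R k ^ DIM('a)))"
    using assms(2,3) by (simp add: emeasure_cball mult.assoc flip: ennreal_mult')
  finally show ?thesis .
qed

lemma nn_integral_le_dyadic_geometric:
  fixes x :: "'a::euclidean_space" and f :: "'a \<Rightarrow> ennreal" and e :: real
  assumes "0 < R\<^sub>0" "0 < b" "b powr (e + DIM('a)) < 1"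
    and shell: "\<And>y. f y \<noteq> 0 \<Longrightarrow> \<exists>k. R\<^sub>0 * b ^ k / 2 \<le> dist x y \<and> dist x y \<le> R\<^sub>0 * b ^ k"
    and f_le: "\<And>y. f y \<le> ennreal (dist x y powr e)"
  shows "(\<integral>\<^sup>+y. f y \<partial>lebesgue)
    \<le> ennreal (2 powr \<bar>e\<bar> * unit_ball_vol DIM('a) * R\<^sub>0 powr (e + DIM('a)) / (1 - b powr (e + DIM('a))))"
proof -
  define R where "R k = R\<^sub>0 * b ^ k" for k
  define C where "C = 2 powr \<bar>e\<bar> * unit_ball_vol DIM('a) * R\<^sub>0 powr (e + DIM('a))"
  have R_pos: "0 < R k" for k using assms unfolding R_def by simp
  have "(\<integral>\<^sup>+y. f y \<partial>lebesgue)
      \<le> (\<Sum>k. ennreal (2 powr \<bar>e\<bar> * R k powr e * unit_ball_vol DIM('a) * R k ^ DIM('a)))"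
  proof (rule nn_integral_le_sum_cball_volumes)
    fix y assume "f y \<noteq> 0"
    then obtain k where k: "R k / 2 \<le> dist x y" "dist x y \<le> R k" using shell unfolding R_def by blast
    have "f y \<le> ennreal (2 powr \<bar>e\<bar> * R k powr e)"
      using f_le[of y] powr_le_on_dyadic_shell[OF R_pos k] by (meson ennreal_leI order_trans)
    with k show "\<exists>k. dist x y \<le> R k \<and> f y \<le> ennreal (2 powr \<bar>e\<bar> * R k powr e)" by blast
  qed (use R_pos in \<open>auto intro: less_imp_le\<close>)
  also have "\<dots> = (\<Sum>k. ennreal (C * (b powr (e + DIM('a))) ^ k))"
  proof (intro suminf_cong arg_cong[where f = ennreal])
    fix k
    have "R k powr e * R k ^ DIM('a) = R k powr (e + DIM('a))"
      using R_pos[of k] by (simp add: powr_add powr_realpow)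
    then show "2 powr \<bar>e\<bar> * R k powr e * unit_ball_vol DIM('a) * R k ^ DIM('a)
        = C * (b powr (e + DIM('a))) ^ k"
      using assms(2) unfolding C_def R_def by (simp add: powr_mult_power mult_ac)
  qed
  also have "\<dots> = ennreal (C / (1 - b powr (e + DIM('a))))"
    using assms by (intro suminf_ennreal_geometric) (simp_all add: C_def)
  finally show ?thesis unfolding C_def .
qed

lemma nn_integral_dist_powr_ball:
  fixes x :: "'a::euclidean_space" and e :: real
  assumes "0 < \<rho>" "0 < e + DIM('a)"
  shows "(\<integral>\<^sup>+y. indicator (ball x \<rho>) y * ennreal (dist x y powr e) \<partial>lebesgue)
    \<le> ennreal (2 powr \<bar>e\<bar> * unit_ball_vol DIM('a) * \<rho> powr (e + DIM('a)) / (1 - (1/2) powr (e + DIM('a))))"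
proof (rule nn_integral_le_dyadic_geometric)
  show "(1/2) powr (e + DIM('a)) < 1"
    using powr_less_mono2[OF assms(2), of "1/2" 1] by simp
  fix y
  assume "indicator (ball x \<rho>) y * ennreal (dist x y powr e) \<noteq> 0"
  then have y: "0 < dist x y" "dist x y < \<rho>" by (auto simp: indicator_def split: if_splits)
  then obtain k :: nat where k: "2 ^ k \<le> \<rho> / dist x y" "\<rho> / dist x y < 2 ^ Suc k"
    using ex_dyadic_bracket[of "\<rho> / dist x y"] by auto
  then have "\<rho> * (1/2) ^ k / 2 \<le> dist x y \<and> dist x y \<le> \<rho> * (1/2) ^ k"
    using y by (simp add: field_simps)
  then show "\<exists>k. \<rho> * (1/2) ^ k / 2 \<le> dist x y \<and> dist x y \<le> \<rho> * (1/2) ^ k" ..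
qed (use assms in \<open>auto simp: indicator_def\<close>)

lemma nn_integral_dist_powr_outside_ball:
  fixes x :: "'a::euclidean_space" and e :: real
  assumes "0 < \<rho>" "e + DIM('a) < 0"
  shows "(\<integral>\<^sup>+y. indicator (- ball x \<rho>) y * ennreal (dist x y powr e) \<partial>lebesgue)
    \<le> ennreal (2 powr \<bar>e\<bar> * unit_ball_vol DIM('a) * (2 * \<rho>) powr (e + DIM('a)) / (1 - 2 powr (e + DIM('a))))"
proof (rule nn_integral_le_dyadic_geometric)
  show "2 powr (e + DIM('a)) < 1"
    using assms(2) by (intro powr_less_one) auto
  fix y
  assume "indicator (- ball x \<rho>) y * ennreal (dist x y powr e) \<noteq> 0"
  then have y: "\<rho> \<le> dist x y" by (auto simp: indicator_def split: if_splits)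
  then obtain k :: nat where k: "2 ^ k \<le> dist x y / \<rho>" "dist x y / \<rho> < 2 ^ Suc k"
    using ex_dyadic_bracket[of "dist x y / \<rho>"] assms(1) by auto
  then have "2 * \<rho> * 2 ^ k / 2 \<le> dist x y \<and> dist x y \<le> 2 * \<rho> * 2 ^ k"
    using assms(1) by (simp add: field_simps)
  then show "\<exists>k. 2 * \<rho> * 2 ^ k / 2 \<le> dist x y \<and> dist x y \<le> 2 * \<rho> * 2 ^ k" ..
qed (use assms in \<open>auto simp: indicator_def\<close>)

lemma borel_measurable_lebesgue_of_borel:
  "f \<in> borel_measurable borel \<Longrightarrow> f \<in> borel_measurable (lebesgue :: 'a::euclidean_space measure)"
  by (simp add: measurable_completion)

lemma borel_measurable_dist_lebesgue [measurable]:
  "(\<lambda>y. dist x y) \<in> borel_measurable (lebesgue :: 'a::euclidean_space measure)"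
  by (intro borel_measurable_lebesgue_of_borel borel_measurable_continuous_onI continuous_intros)

lemma borel_measurable_zero_extension:
  fixes f v :: "'a::euclidean_space \<Rightarrow> real"
  assumes "open \<Omega>" "continuous_on \<Omega> f"
    and "\<And>x. x \<in> \<Omega> \<Longrightarrow> v x = f x" "\<And>x. x \<notin> \<Omega> \<Longrightarrow> v x = 0"
  shows "v \<in> borel_measurable lebesgue"
proof -
  have "(\<lambda>x. indicator \<Omega> x *\<^sub>R f x) \<in> borel_measurable borel"
    using assms(1,2) by (intro borel_measurable_continuous_on_indicator) auto
  moreover have "(\<lambda>x. indicator \<Omega> x *\<^sub>R f x) = v"
    using assms(3,4) by (auto simp: indicator_def)
  ultimately show ?thesis using borel_measurable_lebesgue_of_borel by metis
qed

lemma sigma_finite_measure_lebesgue: "sigma_finite_measure (lebesgue :: 'a::euclidean_space measure)"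
proof
  show "\<exists>A::'a set set. countable A \<and> A \<subseteq> sets lebesgue \<and> \<Union>A = space lebesgue \<and>
      (\<forall>a\<in>A. emeasure lebesgue a \<noteq> \<infinity>)"
    by (intro exI[of _ "range (\<lambda>n::nat. cball 0 (real n))"])
      (auto simp: real_arch_simple emeasure_cball)
qed

lemma nn_integral_symmetric_le_twice_ordered:
  fixes F :: "'a \<Rightarrow> 'a \<Rightarrow> ennreal" and g :: "'a \<Rightarrow> real"
  assumes M: "sigma_finite_measure M"
    and F_meas[measurable]: "(\<lambda>z. F (fst z) (snd z)) \<in> borel_measurable (M \<Otimes>\<^sub>M M)"
    and g_meas[measurable]: "g \<in> borel_measurable M"
    and F_sym: "\<And>x y. F x y = F y x"
  shows "(\<integral>\<^sup>+z. F (fst z) (snd z) \<partial>(M \<Otimes>\<^sub>M M))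
    \<le> 2 * (\<integral>\<^sup>+x. \<integral>\<^sup>+y. (if g y \<le> g x then F x y else 0) \<partial>M \<partial>M)"
proof -
  interpret pair_sigma_finite M M using M by (simp add: pair_sigma_finite_def)
  define P where "P z = (if g (snd z) \<le> g (fst z) then F (fst z) (snd z) else 0)" for z
  define Q where "Q z = (if g (fst z) < g (snd z) then F (fst z) (snd z) else 0)" for z
  have [measurable]: "P \<in> borel_measurable (M \<Otimes>\<^sub>M M)" "Q \<in> borel_measurable (M \<Otimes>\<^sub>M M)"
    unfolding P_def Q_def by measurable
  have P_Pair: "P (x, y) = (if g y \<le> g x then F x y else 0)" for x y
    by (simp add: P_def)
  have "(\<integral>\<^sup>+z. F (fst z) (snd z) \<partial>(M \<Otimes>\<^sub>M M)) = (\<integral>\<^sup>+z. P z + Q z \<partial>(M \<Otimes>\<^sub>M M))"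
    by (intro nn_integral_cong) (simp add: P_def Q_def)
  also have "\<dots> = (\<integral>\<^sup>+x. \<integral>\<^sup>+y. P (x, y) \<partial>M \<partial>M) + (\<integral>\<^sup>+y. \<integral>\<^sup>+x. Q (x, y) \<partial>M \<partial>M)"
    by (simp add: nn_integral_add M1.nn_integral_fst nn_integral_snd)
  also have "(\<integral>\<^sup>+y. \<integral>\<^sup>+x. Q (x, y) \<partial>M \<partial>M) \<le> (\<integral>\<^sup>+y. \<integral>\<^sup>+x. P (y, x) \<partial>M \<partial>M)"
    by (intro nn_integral_mono) (auto simp: P_def Q_def F_sym)
  finally show ?thesis by (simp add: P_Pair mult_2)
qed

lemma d_Omega_nonneg [simp]: "0 \<le> d_Omega \<Omega> x"
  unfolding d_Omega_def by (rule infdist_nonneg)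

lemma d_Omega_outside: "x \<notin> \<Omega> \<Longrightarrow> d_Omega \<Omega> x = 0"
  unfolding d_Omega_def by simp

lemma abs_d_Omega_diff_le: "\<bar>d_Omega \<Omega> x - d_Omega \<Omega> y\<bar> \<le> dist x y"
  unfolding d_Omega_def by (rule infdist_triangle_abs)

lemma d_Omega_pos:
  assumes "open \<Omega>" "\<Omega> \<noteq> UNIV" "x \<in> \<Omega>"
  shows "0 < d_Omega \<Omega> x"
  unfolding d_Omega_def using assms by (intro infdist_pos_not_in_closed) auto

lemma ball_d_Omega_subset: "ball x (d_Omega \<Omega> x) \<subseteq> \<Omega>"
  unfolding d_Omega_def using infdist_le[of _ "- \<Omega>" x] by (force simp: dist_commute)

lemma closed_segment_subset_if_dist_lt_d_Omega:
  assumes "dist x y < d_Omega \<Omega> x"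
  shows "closed_segment x y \<subseteq> \<Omega>"
proof -
  have "0 < d_Omega \<Omega> x" using assms zero_le_dist[of x y] by linarith
  then show ?thesis
    using assms ball_d_Omega_subset[of x \<Omega>] by (intro order_trans[OF closed_segment_subset]) auto
qed

lemma d_Omega_bounded:
  fixes \<Omega> :: "'a::euclidean_space set"
  assumes "bounded \<Omega>"
  obtains M where "0 < M" "\<And>x. d_Omega \<Omega> x \<le> M"
proof -
  obtain B where B: "0 < B" "\<And>x. x \<in> \<Omega> \<Longrightarrow> norm x \<le> B"
    using assms bounded_pos by metis
  have "\<Omega> \<noteq> UNIV" using assms not_bounded_UNIV by metis
  then obtain p where p: "p \<notin> \<Omega>" by blast
  have "d_Omega \<Omega> x \<le> B + norm p" for x
  proof (cases "x \<in> \<Omega>")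
    case True
    have "d_Omega \<Omega> x \<le> dist x p" unfolding d_Omega_def using p by (intro infdist_le) auto
    also have "\<dots> \<le> norm x + norm p" by (simp add: dist_norm norm_triangle_ineq4)
    finally show ?thesis using B(2)[OF True] by linarith
  qed (use B in \<open>simp add: d_Omega_outside add_nonneg_nonneg\<close>)
  then show ?thesis using B(1) that[of "B + norm p"] by (simp add: add_pos_nonneg)
qed

lemma borel_measurable_d_Omega [measurable]:
  "d_Omega \<Omega> \<in> borel_measurable (lebesgue :: 'a::euclidean_space measure)"
  unfolding d_Omega_def[abs_def]
  by (intro borel_measurable_lebesgue_of_borel borel_measurable_continuous_onI continuous_intros)

section \<open>A sufficient condition for membership in the fractional Sobolev space\<close>

definition gagliardo_kernel :: "real \<Rightarrow> ('a::euclidean_space \<Rightarrow> real) \<Rightarrow> 'a \<Rightarrow> 'a \<Rightarrow> real" where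
  "gagliardo_kernel s v x y = (v x - v y)\<^sup>2 / norm (x - y) powr (real DIM('a) + 2 * s)"

lemma gagliardo_kernel_commute: "gagliardo_kernel s v x y = gagliardo_kernel s v y x"
  by (simp add: gagliardo_kernel_def norm_minus_commute power2_commute)

lemma Hs_seminorm_sq_eq_gagliardo_kernel:
  "Hs_seminorm_sq s v = ennreal (C_ds DIM('a) s / 2) *
     (\<integral>\<^sup>+z. ennreal (gagliardo_kernel s v (fst z) (snd z)) \<partial>(lebesgue \<Otimes>\<^sub>M lebesgue))"
  for v :: "'a::euclidean_space \<Rightarrow> real"
  by (simp add: Hs_seminorm_sq_def gagliardo_kernel_def)

lemma borel_measurable_gagliardo_kernel:
  fixes v :: "'a::euclidean_space \<Rightarrow> real"
  assumes [measurable]: "v \<in> borel_measurable lebesgue"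
  shows "(\<lambda>z. gagliardo_kernel s v (fst z) (snd z)) \<in> borel_measurable (lebesgue \<Otimes>\<^sub>M lebesgue)"
proof -
  have [measurable]: "fst \<in> lebesgue \<Otimes>\<^sub>M lebesgue \<rightarrow>\<^sub>M (borel :: 'a measure)"
    "snd \<in> lebesgue \<Otimes>\<^sub>M lebesgue \<rightarrow>\<^sub>M (borel :: 'a measure)"
    using measurable_comp[OF measurable_fst id_borel_measurable_lebesgue]
      measurable_comp[OF measurable_snd id_borel_measurable_lebesgue] by (simp_all add: comp_def)
  show ?thesis unfolding gagliardo_kernel_def by measurable
qed

lemma gagliardo_kernel_le_near:
  fixes v :: "'a::euclidean_space \<Rightarrow> real" and s :: real
  assumes "\<bar>v x - v y\<bar> \<le> K * dist x y * r powr (s - 1)"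
  shows "gagliardo_kernel s v x y \<le> K\<^sup>2 * r powr (2 * s - 2) * dist x y powr (2 - (DIM('a) + 2 * s))"
proof (cases "x = y")
  case False
  define t where "t = dist x y"
  have t: "0 < t" using False by (simp add: t_def)
  have "(v x - v y)\<^sup>2 \<le> (K * t * r powr (s - 1))\<^sup>2"
    using assms unfolding t_def by (metis abs_ge_zero power2_abs power_mono)
  also have "\<dots> = K\<^sup>2 * r powr (2 * s - 2) * t powr 2"
    using t by (simp add: power_mult_distrib powr_add[symmetric] power2_eq_square flip: powr_realpow)
  finally have "gagliardo_kernel s v x y \<le> K\<^sup>2 * r powr (2 * s - 2) * t powr 2 / t powr (DIM('a) + 2 * s)"
    unfolding gagliardo_kernel_def t_def dist_norm by (simp add: divide_right_mono)
  also have "\<dots> = K\<^sup>2 * r powr (2 * s - 2) * t powr (2 - (DIM('a) + 2 * s))"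
    by (simp only: powr_diff times_divide_eq_right)
  finally show ?thesis unfolding t_def .
qed (simp add: gagliardo_kernel_def)

lemma gagliardo_kernel_le_far:
  fixes v :: "'a::euclidean_space \<Rightarrow> real" and s :: real
  assumes "\<bar>v x - v y\<bar> \<le> B"
  shows "gagliardo_kernel s v x y \<le> B\<^sup>2 * dist x y powr - (DIM('a) + 2 * s)"
proof -
  have "(v x - v y)\<^sup>2 \<le> B\<^sup>2" using assms by (metis abs_ge_zero power2_abs power_mono)
  then have "(v x - v y)\<^sup>2 * dist x y powr - (DIM('a) + 2 * s) \<le> B\<^sup>2 * dist x y powr - (DIM('a) + 2 * s)"
    by (rule mult_right_mono) simp
  then show ?thesis
    unfolding gagliardo_kernel_def dist_norm by (simp only: powr_minus divide_inverse)
qed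

text \<open>Up to a constant, this bounds the kernel at a point at distance r from the boundary:
  the first branch comes from the interior estimate, the second from the decay towards the boundary.\<close>
definition gagliardo_majorant :: "nat \<Rightarrow> real \<Rightarrow> real \<Rightarrow> real \<Rightarrow> real" where
  "gagliardo_majorant n s r t =
     (if t < r / 2 then r powr (2 * s - 2) * t powr (2 - (n + 2 * s))
      else r powr (2 * s) * t powr - (n + 2 * s))"

lemma gagliardo_kernel_le_majorant:
  fixes v :: "'a::euclidean_space \<Rightarrow> real" and s r K B :: real
  assumes near: "dist x y < r / 2 \<Longrightarrow> \<bar>v x - v y\<bar> \<le> K * dist x y * r powr (s - 1)"
    and far: "\<bar>v x\<bar> \<le> B * r powr s" "\<bar>v y\<bar> \<le> B * r powr s"
  shows "gagliardo_kernel s v x y \<le> (K\<^sup>2 + 4 * B\<^sup>2) * gagliardo_majorant DIM('a) s r (dist x y)"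
proof (cases "dist x y < r / 2")
  case True
  have "gagliardo_kernel s v x y \<le> K\<^sup>2 * (r powr (2 * s - 2) * dist x y powr (2 - (DIM('a) + 2 * s)))"
    using gagliardo_kernel_le_near[OF near[OF True]] by (simp add: mult.assoc)
  also have "\<dots> \<le> (K\<^sup>2 + 4 * B\<^sup>2) * (r powr (2 * s - 2) * dist x y powr (2 - (DIM('a) + 2 * s)))"
    by (intro mult_right_mono) auto
  finally show ?thesis using True by (simp add: gagliardo_majorant_def)
next
  case False
  have "(r powr s)\<^sup>2 = r powr (2 * s)"
    by (metis power2_eq_square powr_add mult_2)
  then have square: "(2 * B * r powr s)\<^sup>2 = 4 * B\<^sup>2 * r powr (2 * s)"
    by (simp add: power_mult_distrib)
  have "\<bar>v x - v y\<bar> \<le> 2 * B * r powr s" using far by linarith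
  then have "gagliardo_kernel s v x y \<le> (2 * B * r powr s)\<^sup>2 * dist x y powr - (DIM('a) + 2 * s)"
    by (rule gagliardo_kernel_le_far)
  also have "\<dots> = 4 * B\<^sup>2 * (r powr (2 * s) * dist x y powr - (DIM('a) + 2 * s))"
    unfolding square by (simp only: mult.assoc)
  also have "\<dots> \<le> (K\<^sup>2 + 4 * B\<^sup>2) * (r powr (2 * s) * dist x y powr - (DIM('a) + 2 * s))"
    by (intro mult_right_mono) auto
  finally show ?thesis using False by (simp add: gagliardo_majorant_def)
qed

text \<open>The powers of r in the majorant exactly compensate the scaling of the two radial integrals,
  so the bound is uniform in r.\<close>
lemma nn_integral_gagliardo_majorant_le:
  fixes s :: real
  assumes "0 < s" "s < 1"
  obtains C where "\<And>(x :: 'a::euclidean_space) r. 0 < r \<Longrightarrow>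
    (\<integral>\<^sup>+y. ennreal (gagliardo_majorant DIM('a) s r (dist x y)) \<partial>lebesgue) \<le> ennreal C"
proof -
  define n where "n = real DIM('a)"
  define e\<^sub>1 where "e\<^sub>1 = 2 - (n + 2 * s)"
  define e\<^sub>2 where "e\<^sub>2 = - (n + 2 * s)"
  define C\<^sub>1 where "C\<^sub>1 = 2 powr \<bar>e\<^sub>1\<bar> * unit_ball_vol n / (1 - (1/2) powr (2 - 2 * s))"
  define C\<^sub>2 where "C\<^sub>2 = 2 powr \<bar>e\<^sub>2\<bar> * unit_ball_vol n / (1 - 2 powr (- 2 * s))"
  have C\<^sub>1: "0 \<le> C\<^sub>1"
    using powr_less_mono2[of "2 - 2 * s" "1/2" 1] \<open>s < 1\<close> by (simp add: C\<^sub>1_def n_def)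
  have C\<^sub>2: "0 \<le> C\<^sub>2"
    using powr_less_one[of 2 "- 2 * s"] \<open>0 < s\<close> by (simp add: C\<^sub>2_def n_def)
  have "(\<integral>\<^sup>+y. ennreal (gagliardo_majorant DIM('a) s r (dist x y)) \<partial>lebesgue)
      \<le> ennreal (C\<^sub>1 / 2 powr (2 - 2 * s) + C\<^sub>2)" if r: "0 < r" for x :: 'a and r
  proof -
    define f\<^sub>1 where "f\<^sub>1 = (\<lambda>y. indicator (ball x (r/2)) y * ennreal (dist x y powr e\<^sub>1))"
    define f\<^sub>2 where "f\<^sub>2 = (\<lambda>y. indicator (- ball x (r/2)) y * ennreal (dist x y powr e\<^sub>2))"
    have split: "ennreal (gagliardo_majorant DIM('a) s r (dist x y))
        = ennreal (r powr (2 * s - 2)) * f\<^sub>1 y + ennreal (r powr (2 * s)) * f\<^sub>2 y" for y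
      by (cases "dist x y < r / 2")
        (simp_all add: gagliardo_majorant_def f\<^sub>1_def f\<^sub>2_def e\<^sub>1_def e\<^sub>2_def n_def flip: ennreal_mult)
    have [measurable]: "ball x (r/2) \<in> sets lebesgue" by simp
    have [measurable]: "f\<^sub>1 \<in> borel_measurable lebesgue" "f\<^sub>2 \<in> borel_measurable lebesgue"
      unfolding f\<^sub>1_def f\<^sub>2_def by measurable
    have "(\<integral>\<^sup>+y. ennreal (gagliardo_majorant DIM('a) s r (dist x y)) \<partial>lebesgue)
        = ennreal (r powr (2 * s - 2)) * integral\<^sup>N lebesgue f\<^sub>1
          + ennreal (r powr (2 * s)) * integral\<^sup>N lebesgue f\<^sub>2"
      unfolding split by (simp add: nn_integral_add nn_integral_cmult)
    also have "\<dots> \<le> ennreal (r powr (2 * s - 2)) * ennreal (C\<^sub>1 * (r/2) powr (2 - 2 * s))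
        + ennreal (r powr (2 * s)) * ennreal (C\<^sub>2 * r powr (- 2 * s))"
      using nn_integral_dist_powr_ball[of "r/2" e\<^sub>1 x] nn_integral_dist_powr_outside_ball[of "r/2" e\<^sub>2 x]
        r assms
      by (intro add_mono mult_left_mono)
        (simp_all add: f\<^sub>1_def f\<^sub>2_def e\<^sub>1_def e\<^sub>2_def C\<^sub>1_def C\<^sub>2_def n_def)
    also have "\<dots> = ennreal (C\<^sub>1 / 2 powr (2 - 2 * s) + C\<^sub>2)"
    proof -
      have "r powr (2 * s - 2) * r powr (2 - 2 * s) = 1" "r powr (2 * s) * r powr (- 2 * s) = 1"
        using r by (simp_all flip: powr_add)
      then have "r powr (2 * s - 2) * (C\<^sub>1 * (r/2) powr (2 - 2 * s))
          + r powr (2 * s) * (C\<^sub>2 * r powr (- 2 * s))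
          = C\<^sub>1 / 2 powr (2 - 2 * s) + C\<^sub>2"
        by (simp add: powr_divide field_simps)
      then show ?thesis
        using C\<^sub>1 C\<^sub>2 by (simp flip: ennreal_mult ennreal_plus)
    qed
    finally show ?thesis .
  qed
  then show ?thesis by (rule that)
qed

lemma nn_integral_gagliardo_kernel_slice_le:
  fixes \<Omega> :: "'a::euclidean_space set" and v :: "'a \<Rightarrow> real" and s A K :: real
  assumes "open \<Omega>" "\<Omega> \<noteq> UNIV" "0 < s" "s < 1"
    and outside: "\<And>x. x \<notin> \<Omega> \<Longrightarrow> v x = 0"
    and decay: "\<And>y. \<bar>v y\<bar> \<le> A * d_Omega \<Omega> y powr s"
    and near: "\<And>x y. x \<in> \<Omega> \<Longrightarrow> dist x y < d_Omega \<Omega> x / 2 \<Longrightarrow>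
      \<bar>v x - v y\<bar> \<le> K * dist x y * d_Omega \<Omega> x powr (s - 1)"
  obtains C where "\<And>x. (\<integral>\<^sup>+y. (if d_Omega \<Omega> y \<le> d_Omega \<Omega> x then ennreal (gagliardo_kernel s v x y) else 0)
      \<partial>lebesgue)
    \<le> ennreal C * indicator \<Omega> x"
proof -
  obtain C where C: "\<And>(x :: 'a) r. 0 < r \<Longrightarrow>
      (\<integral>\<^sup>+y. ennreal (gagliardo_majorant DIM('a) s r (dist x y)) \<partial>lebesgue) \<le> ennreal C"
    using nn_integral_gagliardo_majorant_le[OF assms(3,4)] by blast
  have "(\<integral>\<^sup>+y. (if d_Omega \<Omega> y \<le> d_Omega \<Omega> x then ennreal (gagliardo_kernel s v x y) else 0) \<partial>lebesgue)
    \<le> ennreal ((K\<^sup>2 + 4 * A\<^sup>2) * C) * indicator \<Omega> x" for x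
  proof (cases "x \<in> \<Omega>")
    case False
    have "gagliardo_kernel s v x y = 0" if "d_Omega \<Omega> y \<le> d_Omega \<Omega> x" for y
    proof -
      have "y \<notin> \<Omega>"
        using that d_Omega_outside[OF False] d_Omega_pos[OF assms(1,2), of y] by fastforce
      then show ?thesis using False by (simp add: outside gagliardo_kernel_def)
    qed
    then show ?thesis by (simp add: if_distrib cong: if_cong)
  next
    case True
    define r where "r = d_Omega \<Omega> x"
    have r: "0 < r" unfolding r_def using d_Omega_pos[OF assms(1,2) True] .
    have decay_r: "\<bar>v z\<bar> \<le> \<bar>A\<bar> * r powr s" if "d_Omega \<Omega> z \<le> r" for z
    proof -
      have "A * d_Omega \<Omega> z powr s \<le> \<bar>A\<bar> * r powr s"
        using that \<open>0 < s\<close> by (intro mult_mono powr_mono2) auto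
      then show ?thesis using decay[of z] by linarith
    qed
    have "(if d_Omega \<Omega> y \<le> r then ennreal (gagliardo_kernel s v x y) else 0)
        \<le> ennreal ((K\<^sup>2 + 4 * A\<^sup>2) * gagliardo_majorant DIM('a) s r (dist x y))" for y
      using gagliardo_kernel_le_majorant[of x y r v K s "\<bar>A\<bar>"] near[OF True] decay_r[of x] decay_r[of y]
      by (auto simp: r_def ennreal_leI)
    then have "(\<integral>\<^sup>+y. (if d_Omega \<Omega> y \<le> r then ennreal (gagliardo_kernel s v x y) else 0) \<partial>lebesgue)
        \<le> (\<integral>\<^sup>+y. ennreal (K\<^sup>2 + 4 * A\<^sup>2) * ennreal (gagliardo_majorant DIM('a) s r (dist x y)) \<partial>lebesgue)"
      by (intro nn_integral_mono) (simp add: ennreal_mult')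
    also have "\<dots> = ennreal (K\<^sup>2 + 4 * A\<^sup>2)
        * (\<integral>\<^sup>+y. ennreal (gagliardo_majorant DIM('a) s r (dist x y)) \<partial>lebesgue)"
      by (rule nn_integral_cmult) (unfold gagliardo_majorant_def, measurable)
    also have "\<dots> \<le> ennreal (K\<^sup>2 + 4 * A\<^sup>2) * ennreal C"
      by (rule mult_left_mono[OF C[OF r]]) simp
    also have "\<dots> = ennreal ((K\<^sup>2 + 4 * A\<^sup>2) * C)"
      by (rule ennreal_mult'[symmetric]) simp
    finally show ?thesis using True by (simp add: r_def)
  qed
  then show ?thesis by (rule that)
qed

lemma nn_integral_square_lt_top:
  fixes v :: "'a \<Rightarrow> real"
  assumes "\<Omega> \<in> sets M" "emeasure M \<Omega> < \<infinity>"
    and "\<And>x. x \<notin> \<Omega> \<Longrightarrow> v x = 0" "\<And>x. x \<in> \<Omega> \<Longrightarrow> \<bar>v x\<bar> \<le> B"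
  shows "(\<integral>\<^sup>+x. ennreal ((v x)\<^sup>2) \<partial>M) < \<infinity>"
proof -
  have "ennreal ((v x)\<^sup>2) \<le> ennreal (B\<^sup>2) * indicator \<Omega> x" for x
  proof (cases "x \<in> \<Omega>")
    case True
    then have "(v x)\<^sup>2 \<le> B\<^sup>2" using assms(4) by (metis abs_ge_zero power2_abs power_mono)
    then show ?thesis using True by (simp add: ennreal_leI)
  qed (simp add: assms(3))
  then have "(\<integral>\<^sup>+x. ennreal ((v x)\<^sup>2) \<partial>M) \<le> ennreal (B\<^sup>2) * emeasure M \<Omega>"
    using nn_integral_mono nn_integral_cmult_indicator[OF assms(1)] by metis
  also have "\<dots> < \<infinity>" using assms(2) by (simp add: ennreal_mult_less_top)
  finally show ?thesis .
qed

lemma in_Hs_if_boundary_decay: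
  fixes \<Omega> :: "'a::euclidean_space set" and v :: "'a \<Rightarrow> real" and s A K :: real
  assumes "open \<Omega>" "bounded \<Omega>" "0 < s" "s < 1"
    and v_meas: "v \<in> borel_measurable lebesgue"
    and outside: "\<And>x. x \<notin> \<Omega> \<Longrightarrow> v x = 0"
    and decay: "\<And>y. \<bar>v y\<bar> \<le> A * d_Omega \<Omega> y powr s"
    and near: "\<And>x y. x \<in> \<Omega> \<Longrightarrow> dist x y < d_Omega \<Omega> x / 2 \<Longrightarrow>
      \<bar>v x - v y\<bar> \<le> K * dist x y * d_Omega \<Omega> x powr (s - 1)"
  shows "v \<in> Hs s"
proof -
  have "\<Omega> \<noteq> UNIV" using assms(2) not_bounded_UNIV by metis
  have \<Omega>_finite: "emeasure lebesgue \<Omega> < \<infinity>"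
    using emeasure_bounded_finite[OF assms(2)] assms(1) by (simp add: emeasure_completion)
  have \<Omega>_sets: "\<Omega> \<in> sets lebesgue" using assms(1) by simp
  obtain M where M: "0 < M" "\<And>x. d_Omega \<Omega> x \<le> M" using d_Omega_bounded[OF assms(2)] by blast
  have "\<bar>v x\<bar> \<le> \<bar>A\<bar> * M powr s" for x
  proof -
    have "A * d_Omega \<Omega> x powr s \<le> \<bar>A\<bar> * M powr s"
      using M(2)[of x] \<open>0 < s\<close> by (intro mult_mono powr_mono2) auto
    then show ?thesis using decay[of x] by linarith
  qed
  then have L2: "(\<integral>\<^sup>+x. ennreal ((v x)\<^sup>2) \<partial>lebesgue) < \<infinity>"
    using nn_integral_square_lt_top[where v = v, OF \<Omega>_sets \<Omega>_finite outside] by blast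
  obtain C where slice: "\<And>x. (\<integral>\<^sup>+y. (if d_Omega \<Omega> y \<le> d_Omega \<Omega> x
        then ennreal (gagliardo_kernel s v x y) else 0) \<partial>lebesgue)
      \<le> ennreal C * indicator \<Omega> x"
    using nn_integral_gagliardo_kernel_slice_le[OF assms(1) \<open>\<Omega> \<noteq> UNIV\<close> assms(3,4) outside decay near]
    by blast
  have "(\<integral>\<^sup>+z. ennreal (gagliardo_kernel s v (fst z) (snd z)) \<partial>(lebesgue \<Otimes>\<^sub>M lebesgue))
      \<le> 2 * (\<integral>\<^sup>+x. \<integral>\<^sup>+y. (if d_Omega \<Omega> y \<le> d_Omega \<Omega> x
        then ennreal (gagliardo_kernel s v x y) else 0) \<partial>lebesgue \<partial>lebesgue)"
    by (intro nn_integral_symmetric_le_twice_ordered sigma_finite_measure_lebesgue borel_measurable_d_Omega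
        measurable_compose[OF borel_measurable_gagliardo_kernel[OF v_meas] measurable_ennreal])
      (simp only: gagliardo_kernel_commute)
  also have "\<dots> \<le> 2 * (\<integral>\<^sup>+x. ennreal C * indicator \<Omega> x \<partial>lebesgue)"
    by (intro mult_left_mono nn_integral_mono slice) simp
  also have "\<dots> = 2 * (ennreal C * emeasure lebesgue \<Omega>)"
    by (simp only: nn_integral_cmult_indicator[OF \<Omega>_sets])
  also have "\<dots> < \<infinity>" using \<Omega>_finite by (simp add: ennreal_mult_less_top)
  finally have "Hs_seminorm_sq s v < \<infinity>"
    by (simp add: Hs_seminorm_sq_eq_gagliardo_kernel ennreal_mult_less_top)
  then show ?thesis unfolding Hs_def using L2 v_meas by simp
qed

section \<open>Weighted piecewise linear functions\<close>

lemma powr_diff_le_powr_mult_diff: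
  fixes a b s :: real
  assumes "0 < b" "b \<le> a" "0 \<le> s" "s \<le> 1"
  shows "a powr s - b powr s \<le> b powr (s - 1) * (a - b)"
proof -
  have "(a / b) powr s \<le> (a / b) powr 1" using assms by (intro powr_mono) auto
  then have "a powr s \<le> b powr s * (a / b)"
    using assms by (simp add: powr_divide divide_le_eq mult.commute)
  also have "\<dots> = b powr (s - 1) * a" using assms by (simp add: powr_diff)
  finally show ?thesis using assms by (simp add: powr_diff right_diff_distrib)
qed

lemma abs_powr_diff_le:
  fixes a b m s :: real
  assumes "0 < m" "m \<le> a" "m \<le> b" "0 \<le> s" "s \<le> 1"
  shows "\<bar>a powr s - b powr s\<bar> \<le> m powr (s - 1) * \<bar>a - b\<bar>"
proof -
  have one_sided: "a' powr s - b' powr s \<le> m powr (s - 1) * (a' - b')" if "m \<le> b'" "b' \<le> a'" for a' b'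
  proof -
    have "a' powr s - b' powr s \<le> b' powr (s - 1) * (a' - b')"
      using that assms by (intro powr_diff_le_powr_mult_diff) auto
    also have "\<dots> \<le> m powr (s - 1) * (a' - b')"
      using that assms by (intro mult_right_mono powr_mono2') auto
    finally show ?thesis .
  qed
  show ?thesis
  proof (cases "b \<le> a")
    case True
    then show ?thesis using one_sided[of b a] powr_mono2[of s b a] assms by simp
  next
    case False
    then show ?thesis using one_sided[of a b] powr_mono2[of s a b] assms by simp
  qed
qed

lemma one_le_powr_mult_powr:
  fixes r M s :: real
  assumes "0 < r" "r \<le> M" "s \<le> 1"
  shows "1 \<le> M powr (1 - s) * r powr (s - 1)"
proof -
  have "M powr (1 - s) * M powr (s - 1) = 1" using assms by (simp flip: powr_add)
  moreover have "M powr (s - 1) \<le> r powr (s - 1)" using assms by (intro powr_mono2') auto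
  ultimately show ?thesis by (metis mult_left_mono powr_ge_zero)
qed

lemma piecewise_affine_lipschitz_on_segment:
  fixes \<phi> :: "'a::euclidean_space \<Rightarrow> real"
  assumes fin: "finite \<K>" and closed: "\<And>K. K \<in> \<K> \<Longrightarrow> closed K"
    and affine: "\<And>K z. K \<in> \<K> \<Longrightarrow> z \<in> K \<Longrightarrow> \<phi> z = a K \<bullet> z + b K"
    and seg: "closed_segment x y \<subseteq> \<Union>\<K>"
  shows "\<bar>\<phi> x - \<phi> y\<bar> \<le> (\<Sum>K\<in>\<K>. norm (a K)) * dist x y"
proof -
  define L where "L = (\<Sum>K\<in>\<K>. norm (a K))"
  have L_nonneg: "0 \<le> L" unfolding L_def by (simp add: sum_nonneg)
  define p where "p t = x + t *\<^sub>R (y - x)" for t :: real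
  have p_cont: "continuous (at t) p" for t unfolding p_def by (intro continuous_intros)
  have "(L * dist x y)-lipschitz_on {0..1} (\<phi> \<circ> p)"
  proof (rule lipschitz_on_closed_Union[where I = \<K> and U = "\<lambda>K. p -` K"])
    fix K assume K: "K \<in> \<K>"
    show "closed (p -` K)" by (intro continuous_closed_vimage closed K p_cont)
    show "(L * dist x y)-lipschitz_on (p -` K) (\<phi> \<circ> p)"
    proof (rule lipschitz_onI)
      fix t t' assume "t \<in> p -` K" "t' \<in> p -` K"
      then have "(\<phi> \<circ> p) t - (\<phi> \<circ> p) t' = a K \<bullet> ((t - t') *\<^sub>R (y - x))"
        using affine[OF K, of "p t"] affine[OF K, of "p t'"] unfolding p_def
        by (simp add: inner_diff_right algebra_simps scaleR_diff_left)
      then have "\<bar>(\<phi> \<circ> p) t - (\<phi> \<circ> p) t'\<bar> \<le> norm (a K) * (\<bar>t - t'\<bar> * norm (y - x))"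
        using Cauchy_Schwarz_ineq2[of "a K" "(t - t') *\<^sub>R (y - x)"] by simp
      also have "\<dots> \<le> L * (\<bar>t - t'\<bar> * norm (y - x))"
        unfolding L_def using member_le_sum[of K \<K> "\<lambda>K. norm (a K)"] K fin
        by (intro mult_right_mono) auto
      finally show "dist ((\<phi> \<circ> p) t) ((\<phi> \<circ> p) t') \<le> L * dist x y * dist t t'"
        by (simp add: dist_real_def dist_norm norm_minus_commute mult_ac)
    qed (use L_nonneg in simp)
  next
    have "p t \<in> closed_segment x y" if "t \<in> {0..1}" for t
      using that unfolding p_def closed_segment_def
      by (intro CollectI exI[of _ t]) (auto simp: algebra_simps)
    then show "{0..1} \<subseteq> (\<Union>K\<in>\<K>. p -` K)" using seg by blast
  qed (use fin L_nonneg in auto)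
  then have "dist ((\<phi> \<circ> p) 1) ((\<phi> \<circ> p) 0) \<le> L * dist x y * dist (1::real) 0"
    by (rule lipschitz_onD) auto
  then show ?thesis unfolding p_def L_def by (simp add: dist_real_def abs_minus_commute)
qed

lemma over_triangulation_covers:
  "over_triangulation \<Omega> h T \<Longrightarrow> closure \<Omega> \<subseteq> \<Union>(simplices_of T)"
  unfolding over_triangulation_def by (elim conjE)

lemma over_triangulation_finite:
  assumes "over_triangulation \<Omega> h T"
  shows "finite T" "\<And>S. S \<in> T \<Longrightarrow> finite S"
  using assms unfolding over_triangulation_def is_simplex_vertices_def by simp_all

lemma PL_lipschitz_on_segments:
  assumes "finite T" "\<And>S. S \<in> T \<Longrightarrow> finite S" "\<phi> \<in> PL T"
  obtains L where "\<And>x y. closed_segment x y \<subseteq> \<Union>(simplices_of T) \<Longrightarrow> \<bar>\<phi> x - \<phi> y\<bar> \<le> L * dist x y"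
proof -
  have "\<forall>K\<in>simplices_of T. \<exists>ab. \<forall>z\<in>K. \<phi> z = fst ab \<bullet> z + snd ab"
    using assms(3) unfolding PL_def by fastforce
  then obtain ab where ab: "\<And>K z. K \<in> simplices_of T \<Longrightarrow> z \<in> K \<Longrightarrow> \<phi> z = fst (ab K) \<bullet> z + snd (ab K)"
    by metis
  have closed: "closed K" if "K \<in> simplices_of T" for K
    using that assms(2) unfolding simplices_of_def
    by (auto intro: compact_imp_closed finite_imp_compact_convex_hull)
  show ?thesis
  proof (rule that)
    fix x y assume "closed_segment x y \<subseteq> \<Union>(simplices_of T)"
    then show "\<bar>\<phi> x - \<phi> y\<bar> \<le> (\<Sum>K\<in>simplices_of T. norm (fst (ab K))) * dist x y"
      using assms(1) by (intro piecewise_affine_lipschitz_on_segment[where b = "\<lambda>K. snd (ab K)"] closed ab)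
        (auto simp: simplices_of_def)
  qed
qed

lemma PL_continuous_on_closure:
  assumes "over_triangulation \<Omega> h T" "open \<Omega>" "\<phi> \<in> PL T"
  shows "continuous_on (closure \<Omega>) \<phi>"
proof -
  have "\<Omega> \<subseteq> Omega_h T"
    unfolding Omega_h_def using over_triangulation_covers[OF assms(1)] assms(2) closure_subset
    by (metis interior_maximal order_trans)
  then have "closure \<Omega> \<subseteq> closure (Omega_h T)" by (rule closure_mono)
  moreover have "continuous_on (closure (Omega_h T)) \<phi>" using assms(3) unfolding PL_def by simp
  ultimately show ?thesis by (rule continuous_on_subset[rotated])
qed

lemma powr_weight_mult_near_estimate:
  fixes \<Omega> :: "'a::euclidean_space set" and \<delta> \<phi> :: "'a \<Rightarrow> real" and s c L\<^sub>\<delta> L\<^sub>\<phi> B M :: real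
  assumes "0 \<le> s" "s \<le> 1" "0 < c"
    and \<delta>_lip: "L\<^sub>\<delta>-lipschitz_on \<Omega> \<delta>"
    and \<delta>_comparable: "\<And>x. x \<in> \<Omega> \<Longrightarrow> d_Omega \<Omega> x / c \<le> \<delta> x \<and> \<delta> x \<le> c * d_Omega \<Omega> x"
    and d_bound: "\<And>x. d_Omega \<Omega> x \<le> M"
    and \<phi>_bound: "\<And>x. x \<in> \<Omega> \<Longrightarrow> \<bar>\<phi> x\<bar> \<le> B"
    and \<phi>_lip: "\<And>x y. closed_segment x y \<subseteq> \<Omega> \<Longrightarrow> \<bar>\<phi> x - \<phi> y\<bar> \<le> L\<^sub>\<phi> * dist x y"
  obtains K where "\<And>x y. x \<in> \<Omega> \<Longrightarrow> dist x y < d_Omega \<Omega> x / 2 \<Longrightarrow>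
    \<bar>\<delta> x powr s * \<phi> x - \<delta> y powr s * \<phi> y\<bar> \<le> K * dist x y * d_Omega \<Omega> x powr (s - 1)"
proof -
  define K where "K = (2 * c) powr (1 - s) * L\<^sub>\<delta> * B + (c * M) powr s * L\<^sub>\<phi> * M powr (1 - s)"
  have "\<bar>\<delta> x powr s * \<phi> x - \<delta> y powr s * \<phi> y\<bar> \<le> K * dist x y * d_Omega \<Omega> x powr (s - 1)"
    if x: "x \<in> \<Omega>" and xy: "dist x y < d_Omega \<Omega> x / 2" for x y
  proof -
    define r where "r = d_Omega \<Omega> x"
    have r: "0 < r" using xy zero_le_dist[of x y] unfolding r_def by linarith
    have seg: "closed_segment x y \<subseteq> \<Omega>"
      using xy r by (intro closed_segment_subset_if_dist_lt_d_Omega) (simp add: r_def)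
    then have y: "y \<in> \<Omega>" by auto
    have "r / 2 \<le> d_Omega \<Omega> y" using abs_d_Omega_diff_le[of \<Omega> x y] xy unfolding r_def by linarith
    then have "r / (2 * c) \<le> d_Omega \<Omega> y / c"
      using divide_right_mono[of "r / 2" "d_Omega \<Omega> y" c] \<open>0 < c\<close> by simp
    moreover have "r / (2 * c) \<le> d_Omega \<Omega> x / c"
      using r \<open>0 < c\<close> unfolding r_def by (intro divide_left_mono) auto
    ultimately have \<delta>_lower: "r / (2 * c) \<le> \<delta> x" "r / (2 * c) \<le> \<delta> y"
      using \<delta>_comparable[OF x] \<delta>_comparable[OF y] by linarith+
    have "\<bar>\<delta> x powr s - \<delta> y powr s\<bar> \<le> (r / (2 * c)) powr (s - 1) * \<bar>\<delta> x - \<delta> y\<bar>"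
      using \<delta>_lower r \<open>0 < c\<close> assms(1,2) by (intro abs_powr_diff_le) auto
    also have "\<dots> = (2 * c) powr (1 - s) * r powr (s - 1) * \<bar>\<delta> x - \<delta> y\<bar>"
      using r \<open>0 < c\<close> by (simp add: powr_divide powr_diff field_simps)
    also have "\<dots> \<le> (2 * c) powr (1 - s) * r powr (s - 1) * (L\<^sub>\<delta> * dist x y)"
      using lipschitz_onD[OF \<delta>_lip x y] by (intro mult_left_mono) (auto simp: dist_real_def)
    finally have \<delta>_diff:
      "\<bar>\<delta> x powr s - \<delta> y powr s\<bar> \<le> (2 * c) powr (1 - s) * r powr (s - 1) * (L\<^sub>\<delta> * dist x y)" .
    have "\<delta> y \<le> c * M"
      using \<delta>_comparable[OF y] d_bound[of y] \<open>0 < c\<close> by (meson mult_left_mono less_imp_le order_trans)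
    then have \<delta>_upper: "\<delta> y powr s \<le> (c * M) powr s"
      using \<delta>_lower r \<open>0 < c\<close> assms(1) by (intro powr_mono2) (auto intro: order_trans[rotated])
    have one_le: "1 \<le> M powr (1 - s) * r powr (s - 1)"
      using r d_bound[of x] assms(2) unfolding r_def by (intro one_le_powr_mult_powr) auto
    have "\<delta> x powr s * \<phi> x - \<delta> y powr s * \<phi> y = (\<delta> x powr s - \<delta> y powr s) * \<phi> x + \<delta> y powr s * (\<phi> x - \<phi> y)"
      by (simp add: algebra_simps)
    then have "\<bar>\<delta> x powr s * \<phi> x - \<delta> y powr s * \<phi> y\<bar>
        \<le> \<bar>\<delta> x powr s - \<delta> y powr s\<bar> * \<bar>\<phi> x\<bar> + \<delta> y powr s * \<bar>\<phi> x - \<phi> y\<bar>"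
      by (metis abs_mult abs_triangle_ineq abs_of_nonneg powr_ge_zero)
    also have "\<dots> \<le> (2 * c) powr (1 - s) * r powr (s - 1) * (L\<^sub>\<delta> * dist x y) * B
        + (c * M) powr s * (L\<^sub>\<phi> * dist x y)"
      using \<delta>_diff \<phi>_bound[OF x] \<delta>_upper \<phi>_lip[OF seg]
      by (intro add_mono mult_mono) (auto intro: order_trans[OF abs_ge_zero])
    also have "(c * M) powr s * (L\<^sub>\<phi> * dist x y)
        \<le> (c * M) powr s * (L\<^sub>\<phi> * dist x y) * (M powr (1 - s) * r powr (s - 1))"
    proof -
      have "0 \<le> (c * M) powr s * (L\<^sub>\<phi> * dist x y)"
        using order_trans[OF abs_ge_zero \<phi>_lip[OF seg]] by simp
      then show ?thesis using mult_left_mono[OF one_le] by simp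
    qed
    finally show ?thesis unfolding K_def r_def by (simp add: algebra_simps)
  qed
  then show ?thesis by (rule that)
qed

lemma powr_weight_mult_in_Hs:
  fixes \<Omega> :: "'a::euclidean_space set" and \<delta> \<phi> v :: "'a \<Rightarrow> real" and s c L\<^sub>\<delta> L\<^sub>\<phi> :: real
  assumes "open \<Omega>" "bounded \<Omega>" "0 < s" "s < 1" "0 < c"
    and \<delta>_lip: "L\<^sub>\<delta>-lipschitz_on \<Omega> \<delta>"
    and \<delta>_comparable: "\<And>x. x \<in> \<Omega> \<Longrightarrow> d_Omega \<Omega> x / c \<le> \<delta> x \<and> \<delta> x \<le> c * d_Omega \<Omega> x"
    and \<phi>_cont: "continuous_on (closure \<Omega>) \<phi>"
    and \<phi>_lip: "\<And>x y. closed_segment x y \<subseteq> \<Omega> \<Longrightarrow> \<bar>\<phi> x - \<phi> y\<bar> \<le> L\<^sub>\<phi> * dist x y"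
    and v_inside: "\<And>x. x \<in> \<Omega> \<Longrightarrow> v x = \<delta> x powr s * \<phi> x"
    and v_outside: "\<And>x. x \<notin> \<Omega> \<Longrightarrow> v x = 0"
  shows "v \<in> Hs s"
proof -
  have "compact (\<phi> ` closure \<Omega>)"
    using compact_closure[of \<Omega>] assms(2) \<phi>_cont by (intro compact_continuous_image) auto
  then obtain B where "\<forall>z \<in> \<phi> ` closure \<Omega>. norm z \<le> B"
    using compact_imp_bounded bounded_iff by metis
  then have B: "\<And>x. x \<in> \<Omega> \<Longrightarrow> \<bar>\<phi> x\<bar> \<le> B" using closure_subset by fastforce
  obtain M where M: "0 < M" "\<And>x. d_Omega \<Omega> x \<le> M" using d_Omega_bounded[OF assms(2)] by blast
  have "\<Omega> \<noteq> UNIV" using assms(2) not_bounded_UNIV by metis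
  have \<delta>_pos: "0 < \<delta> x" if "x \<in> \<Omega>" for x
    using d_Omega_pos[OF assms(1) \<open>\<Omega> \<noteq> UNIV\<close> that] \<delta>_comparable[OF that] \<open>0 < c\<close>
    by (smt (verit) divide_pos_pos)
  have "continuous_on \<Omega> (\<lambda>x. \<delta> x powr s * \<phi> x)"
    using lipschitz_on_continuous_on[OF \<delta>_lip] continuous_on_subset[OF \<phi>_cont closure_subset] \<delta>_pos
    by (intro continuous_intros) (auto simp: less_imp_neq[symmetric])
  then have v_meas: "v \<in> borel_measurable lebesgue"
    by (rule borel_measurable_zero_extension[OF assms(1) _ v_inside v_outside])
  have decay: "\<bar>v y\<bar> \<le> c powr s * B * d_Omega \<Omega> y powr s" for y
  proof (cases "y \<in> \<Omega>")
    case True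
    have "\<delta> y powr s \<le> c powr s * d_Omega \<Omega> y powr s"
      using \<delta>_comparable[OF True] \<delta>_pos[OF True] assms(3,5) by (simp add: powr_mono2 flip: powr_mult)
    then have "\<delta> y powr s * \<bar>\<phi> y\<bar> \<le> c powr s * d_Omega \<Omega> y powr s * B"
      using B[OF True] by (intro mult_mono) auto
    then show ?thesis by (simp add: v_inside[OF True] abs_mult mult_ac)
  qed (simp add: v_outside d_Omega_outside)
  obtain K where near: "\<And>x y. x \<in> \<Omega> \<Longrightarrow> dist x y < d_Omega \<Omega> x / 2 \<Longrightarrow>
      \<bar>\<delta> x powr s * \<phi> x - \<delta> y powr s * \<phi> y\<bar> \<le> K * dist x y * d_Omega \<Omega> x powr (s - 1)"
    using powr_weight_mult_near_estimate[OF _ _ assms(5) \<delta>_lip \<delta>_comparable M(2) B \<phi>_lip] assms(3,4)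
    by (meson less_imp_le)
  show ?thesis
  proof (rule in_Hs_if_boundary_decay[OF assms(1-4) v_meas v_outside decay])
    fix x y assume x: "x \<in> \<Omega>" and xy: "dist x y < d_Omega \<Omega> x / 2"
    then have "y \<in> \<Omega>"
      using closed_segment_subset_if_dist_lt_d_Omega[of x y \<Omega>] zero_le_dist[of x y] by auto
    then show "\<bar>v x - v y\<bar> \<le> K * dist x y * d_Omega \<Omega> x powr (s - 1)"
      using near[OF x xy] by (simp add: v_inside x)
  qed
qed

theorem lemma1p1:
  fixes \<Omega> :: "'a::euclidean_space set" and s h :: real
    and \<delta> :: "'a \<Rightarrow> real" and T :: "'a set set"
  assumes "bounded \<Omega>" and "open \<Omega>" and "C11_boundary \<Omega>"
    and "0 < s" and "s < 1"
    and "assumption_A_delta_1 \<Omega> \<delta>"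
    and "h > 0" and "over_triangulation \<Omega> h T"
  shows "Vh s \<Omega> \<delta> T \<subseteq> Vspace s \<Omega>"
proof
  fix v assume "v \<in> Vh s \<Omega> \<delta> T"
  then obtain \<phi> where \<phi>: "\<phi> \<in> PL T" and v_inside: "\<And>x. x \<in> \<Omega> \<Longrightarrow> v x = \<delta> x powr s * \<phi> x"
    and v_outside: "\<And>x. x \<notin> \<Omega> \<Longrightarrow> v x = 0"
    unfolding Vh_def by blast
  obtain L\<^sub>\<delta> c where \<delta>_lip: "L\<^sub>\<delta>-lipschitz_on (closure \<Omega>) \<delta>" and "0 < c"
    and \<delta>_comparable: "\<And>x. d_Omega \<Omega> x / c \<le> \<delta> x \<and> \<delta> x \<le> c * d_Omega \<Omega> x"
    using assms(6) unfolding assumption_A_delta_1_def by blast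
  obtain L\<^sub>\<phi> where \<phi>_lip:
    "\<And>x y. closed_segment x y \<subseteq> \<Union>(simplices_of T) \<Longrightarrow> \<bar>\<phi> x - \<phi> y\<bar> \<le> L\<^sub>\<phi> * dist x y"
    using PL_lipschitz_on_segments[OF over_triangulation_finite[OF assms(8)] \<phi>] by blast
  have "v \<in> Hs s"
  proof (rule powr_weight_mult_in_Hs[OF assms(2,1,4,5) \<open>0 < c\<close> lipschitz_on_subset[OF \<delta>_lip closure_subset]
        \<delta>_comparable PL_continuous_on_closure[OF assms(8,2) \<phi>] _ v_inside v_outside])
    fix x y assume "closed_segment x y \<subseteq> \<Omega>"
    then show "\<bar>\<phi> x - \<phi> y\<bar> \<le> L\<^sub>\<phi> * dist x y"
      using \<phi>_lip over_triangulation_covers[OF assms(8)] closure_subset by blast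
  qed
  with v_outside show "v \<in> Vspace s \<Omega>" unfolding Vspace_def by blast
qed

end
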